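(* Let $(M,\Delta,S,\varepsilon)$ be a weak Kac algebra with source Cartan subalgebra $N_s$, and write $e=\Delta(1)$. Suppose $N_s\cong\bigoplus_{\alpha=1}^K M_{n_\alpha}(\mathbb{C})$ and let $\{f^\alpha_{pq}\}_{p,q=1,\dots,n_\alpha}^{\alpha=1,\dots,K}$ be a system of matrix units in $N_s$. Then $$e=\sum_\alpha\frac{1}{n_\alpha}\sum_{p,q}f^\alpha_{pq}\otimes S(f^\alpha_{qp}).$$
   Context: All algebras are finite-dimensional over $\mathbb{C}$; $\varsigma$ denotes the flip and $\mu(x\otimes y)=xy$. A weak Kac algebra is a quadruple $(M,\Delta,S,\varepsilon)$ where $M$ is a finite-dimensional $C^*$-algebra; $\Delta:M\to M\otimes M$ is an injective, not necessarily unital, $*$-homomorphism with $(\Delta\otimes\mathrm{id})\Delta=(\mathrm{id}\otimes\Delta)\Delta$; $S:M\to M$ is a linear, unital, antimultiplicative, $*$-preserving bijection with $S^2=\mathrm{id}$ and $(S\otimes S)\circ\Delta=\varsigma\circ\Delta\circ S$; and $\varepsilon:M\to\mathbb{C}$ is linear with $(\varepsilon\otimes\mathrm{id})\Delta=(\mathrm{id}\otimes\varepsilon)\Delta=\mathrm{id}$, $\varepsilon\circ S=\varepsilon$, $\varepsilon(x^* )=\overline{\varepsilon(x)}$, $(\varepsilon\otimes\varepsilon)((x\otimes1)e(1\otimes y))=\varepsilon(xy)$ for all $x,y$, where $e:=\Delta(1)$, and $(\varepsilon_s\otimes\mathrm{id})\Delta(x)=(1\otimes x)e$ for all $x$, where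 $\varepsilon_s:=\mu(S\otimes\mathrm{id})\Delta$. The source Cartan subalgebra is $N_s=\{x\in M:\Delta(x)=e(1\otimes x)=(1\otimes x)e\}$ (a $C^*$-subalgebra of $M$). A system of matrix units $\{f^\alpha_{pq}\}$ means $f^\alpha_{pq}f^\beta_{rs}=\delta_{\alpha\beta}\delta_{qr}f^\alpha_{ps}$, $(f^\alpha_{pq})^*=f^\alpha_{qp}$, $\sum_{\alpha,p}f^\alpha_{pp}=1$, spanning $N_s$. *)

theory Defs
  imports Complex_Main "HOL-Library.Function_Algebras"
begin

text \<open>A finite-dimensional complex vector space is represented as
  'i \<Rightarrow> complex for a finite index type 'i (a basis of M); the algebraic tensor
  product M \<otimes> M is ('i \<times> 'i) \<Rightarrow> complex, with x \<otimes> y given by tens x y.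
  Linear maps on tensor products are the linear extensions of their values on
  elementary tensors of basis vectors.\<close>

definition sc :: "complex \<Rightarrow> ('a \<Rightarrow> complex) \<Rightarrow> ('a \<Rightarrow> complex)" where
  "sc a x = (\<lambda>k. a * x k)"

definition bv :: "'a \<Rightarrow> ('a \<Rightarrow> complex)" where
  "bv i = (\<lambda>k. if k = i then 1 else 0)"

definition clin :: "(('a \<Rightarrow> complex) \<Rightarrow> ('b \<Rightarrow> complex)) \<Rightarrow> bool" where
  "clin F \<longleftrightarrow> (\<forall>x y. F (x + y) = F x + F y) \<and> (\<forall>a x. F (sc a x) = sc a (F x))"

definition antilin :: "(('a \<Rightarrow> complex) \<Rightarrow> ('b \<Rightarrow> complex)) \<Rightarrow> bool" where
  "antilin F \<longleftrightarrow> (\<forall>x y. F (x + y) = F x + F y) \<and> (\<forall>a x. F (sc a x) = sc (cnj a) (F x))"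

definition lfunctional :: "(('a \<Rightarrow> complex) \<Rightarrow> complex) \<Rightarrow> bool" where
  "lfunctional \<phi> \<longleftrightarrow> (\<forall>x y. \<phi> (x + y) = \<phi> x + \<phi> y) \<and> (\<forall>a x. \<phi> (sc a x) = a * \<phi> x)"

definition tens :: "('a \<Rightarrow> complex) \<Rightarrow> ('b \<Rightarrow> complex) \<Rightarrow> ('a \<times> 'b \<Rightarrow> complex)" where
  "tens x y = (\<lambda>(i, j). x i * y j)"

definition tmap :: "(('a \<Rightarrow> complex) \<Rightarrow> ('c \<Rightarrow> complex)) \<Rightarrow> (('b \<Rightarrow> complex) \<Rightarrow> ('d \<Rightarrow> complex))
    \<Rightarrow> ('a::finite \<times> 'b::finite \<Rightarrow> complex) \<Rightarrow> ('c \<times> 'd \<Rightarrow> complex)" where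
  "tmap F G z = (\<Sum>ij\<in>UNIV. sc (z ij) (tens (F (bv (fst ij))) (G (bv (snd ij)))))"

definition tmult :: "(('a \<Rightarrow> complex) \<Rightarrow> ('a \<Rightarrow> complex) \<Rightarrow> ('a \<Rightarrow> complex))
    \<Rightarrow> ('a::finite \<times> 'a \<Rightarrow> complex) \<Rightarrow> ('a \<times> 'a \<Rightarrow> complex) \<Rightarrow> ('a \<times> 'a \<Rightarrow> complex)" where
  "tmult mult z w = (\<Sum>ij\<in>UNIV. \<Sum>kl\<in>UNIV. sc (z ij * w kl)
      (tens (mult (bv (fst ij)) (bv (fst kl))) (mult (bv (snd ij)) (bv (snd kl)))))"

definition tstar :: "(('a \<Rightarrow> complex) \<Rightarrow> ('a \<Rightarrow> complex))
    \<Rightarrow> ('a::finite \<times> 'a \<Rightarrow> complex) \<Rightarrow> ('a \<times> 'a \<Rightarrow> complex)" where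
  "tstar star z = (\<Sum>ij\<in>UNIV. sc (cnj (z ij)) (tens (star (bv (fst ij))) (star (bv (snd ij)))))"

definition flip :: "('a \<times> 'b \<Rightarrow> complex) \<Rightarrow> ('b \<times> 'a \<Rightarrow> complex)" where
  "flip z = (\<lambda>(i, j). z (j, i))"

definition reassoc :: "(('a \<times> 'b) \<times> 'c \<Rightarrow> complex) \<Rightarrow> ('a \<times> ('b \<times> 'c) \<Rightarrow> complex)" where
  "reassoc z = (\<lambda>(i, (j, k)). z ((i, j), k))"

text \<open>(\<phi> \<otimes> id) and (id \<otimes> \<phi>) for a functional \<phi>, using \<complex> \<otimes> M = M = M \<otimes> \<complex>\<close>
definition lslice :: "(('a \<Rightarrow> complex) \<Rightarrow> complex) \<Rightarrow> ('a::finite \<times> 'b::finite \<Rightarrow> complex) \<Rightarrow> ('b \<Rightarrow> complex)" where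
  "lslice \<phi> z = (\<Sum>ij\<in>UNIV. sc (z ij * \<phi> (bv (fst ij))) (bv (snd ij)))"

definition rslice :: "(('b \<Rightarrow> complex) \<Rightarrow> complex) \<Rightarrow> ('a::finite \<times> 'b::finite \<Rightarrow> complex) \<Rightarrow> ('a \<Rightarrow> complex)" where
  "rslice \<phi> z = (\<Sum>ij\<in>UNIV. sc (z ij * \<phi> (bv (snd ij))) (bv (fst ij)))"

definition tfunc :: "(('a \<Rightarrow> complex) \<Rightarrow> complex) \<Rightarrow> (('b \<Rightarrow> complex) \<Rightarrow> complex)
    \<Rightarrow> ('a::finite \<times> 'b::finite \<Rightarrow> complex) \<Rightarrow> complex" where
  "tfunc \<phi> \<psi> z = (\<Sum>ij\<in>UNIV. z ij * \<phi> (bv (fst ij)) * \<psi> (bv (snd ij)))"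

definition tmu :: "(('a \<Rightarrow> complex) \<Rightarrow> ('a \<Rightarrow> complex) \<Rightarrow> ('a \<Rightarrow> complex))
    \<Rightarrow> ('a::finite \<times> 'a \<Rightarrow> complex) \<Rightarrow> ('a \<Rightarrow> complex)" where
  "tmu mult z = (\<Sum>ij\<in>UNIV. sc (z ij) (mult (bv (fst ij)) (bv (snd ij))))"

text \<open>Finite-dimensional C*-algebra: unital associative complex *-algebra admitting
  a C*-norm (completeness is automatic in finite dimension).\<close>
definition fd_cstar_algebra :: "(('i::finite \<Rightarrow> complex) \<Rightarrow> ('i \<Rightarrow> complex) \<Rightarrow> ('i \<Rightarrow> complex))
    \<Rightarrow> (('i \<Rightarrow> complex) \<Rightarrow> ('i \<Rightarrow> complex)) \<Rightarrow> ('i \<Rightarrow> complex) \<Rightarrow> bool" where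
  "fd_cstar_algebra mult star one \<longleftrightarrow>
     (\<forall>x. clin (mult x)) \<and> (\<forall>y. clin (\<lambda>x. mult x y)) \<and>
     (\<forall>x y z. mult (mult x y) z = mult x (mult y z)) \<and>
     (\<forall>x. mult one x = x \<and> mult x one = x) \<and>
     antilin star \<and> (\<forall>x. star (star x) = x) \<and>
     (\<forall>x y. star (mult x y) = mult (star y) (star x)) \<and>
     (\<exists>N :: ('i \<Rightarrow> complex) \<Rightarrow> real.
        (\<forall>x. N x = 0 \<longleftrightarrow> x = 0) \<and>
        (\<forall>x y. N (x + y) \<le> N x + N y) \<and>
        (\<forall>a x. N (sc a x) = cmod a * N x) \<and>
        (\<forall>x y. N (mult x y) \<le> N x * N y) \<and>
        (\<forall>x. N (mult (star x) x) = (N x)\<^sup>2))"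

definition weak_kac_algebra :: "(('i::finite \<Rightarrow> complex) \<Rightarrow> ('i \<Rightarrow> complex) \<Rightarrow> ('i \<Rightarrow> complex))
    \<Rightarrow> (('i \<Rightarrow> complex) \<Rightarrow> ('i \<Rightarrow> complex)) \<Rightarrow> ('i \<Rightarrow> complex)
    \<Rightarrow> (('i \<Rightarrow> complex) \<Rightarrow> ('i \<times> 'i \<Rightarrow> complex))
    \<Rightarrow> (('i \<Rightarrow> complex) \<Rightarrow> ('i \<Rightarrow> complex))
    \<Rightarrow> (('i \<Rightarrow> complex) \<Rightarrow> complex) \<Rightarrow> bool" where
  "weak_kac_algebra mult star one \<Delta> S \<epsilon> \<longleftrightarrow>
     fd_cstar_algebra mult star one \<and>
     \<comment> \<open>\<Delta>: injective, not necessarily unital *-homomorphism, coassociative\<close>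
     clin \<Delta> \<and> inj \<Delta> \<and>
     (\<forall>x y. \<Delta> (mult x y) = tmult mult (\<Delta> x) (\<Delta> y)) \<and>
     (\<forall>x. \<Delta> (star x) = tstar star (\<Delta> x)) \<and>
     (\<forall>x. reassoc (tmap \<Delta> id (\<Delta> x)) = tmap id \<Delta> (\<Delta> x)) \<and>
     \<comment> \<open>antipode\<close>
     clin S \<and> bij S \<and> S one = one \<and>
     (\<forall>x y. S (mult x y) = mult (S y) (S x)) \<and>
     (\<forall>x. S (star x) = star (S x)) \<and>
     (\<forall>x. S (S x) = x) \<and>
     (\<forall>x. tmap S S (\<Delta> x) = flip (\<Delta> (S x))) \<and>
     \<comment> \<open>counit\<close>
     lfunctional \<epsilon> \<and>
     (\<forall>x. lslice \<epsilon> (\<Delta> x) = x) \<and> (\<forall>x. rslice \<epsilon> (\<Delta> x) = x) \<and>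
     (\<forall>x. \<epsilon> (S x) = \<epsilon> x) \<and>
     (\<forall>x. \<epsilon> (star x) = cnj (\<epsilon> x)) \<and>
     (\<forall>x y. tfunc \<epsilon> \<epsilon> (tmult mult (tmult mult (tens x one) (\<Delta> one)) (tens one y))
             = \<epsilon> (mult x y)) \<and>
     (\<forall>x. tmap (\<lambda>z. tmu mult (tmap S id (\<Delta> z))) id (\<Delta> x)
             = tmult mult (tens one x) (\<Delta> one))"

definition source_cartan :: "(('i::finite \<Rightarrow> complex) \<Rightarrow> ('i \<Rightarrow> complex) \<Rightarrow> ('i \<Rightarrow> complex))
    \<Rightarrow> ('i \<Rightarrow> complex) \<Rightarrow> (('i \<Rightarrow> complex) \<Rightarrow> ('i \<times> 'i \<Rightarrow> complex)) \<Rightarrow> ('i \<Rightarrow> complex) set" where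
  "source_cartan mult one \<Delta> =
     {x. \<Delta> x = tmult mult (\<Delta> one) (tens one x) \<and> \<Delta> x = tmult mult (tens one x) (\<Delta> one)}"

end

theory Submission
  imports Defs
begin

text \<open>Write \<open>e = \<Delta>(1)\<close> and \<open>\<epsilon>\<^sub>s = \<mu>(S \<otimes> id)\<Delta>\<close>. Coassociativity together with
  \<open>(\<epsilon>\<^sub>s \<otimes> id)\<Delta>(x) = (1 \<otimes> x)e\<close> puts the right legs of \<open>e\<close> into the target Cartan
  subalgebra \<open>N\<^sub>t\<close>, which \<open>S\<close> maps into \<open>N\<^sub>s\<close>; and \<open>(S \<otimes> S)e = \<sigma>(e)\<close> puts the left
  legs into \<open>N\<^sub>s\<close>. Hence \<open>e = \<Sum> C\<^sub>x\<^sub>y f\<^sub>x \<otimes> S(f\<^sub>y)\<close>, summed over pairs of matrix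
  units. Two identities pin down \<open>C\<close>: \<open>\<epsilon>\<^sub>s(1) = 1\<close> gives \<open>\<Sum> C\<^sub>x\<^sub>y S(f\<^sub>x) S(f\<^sub>y) = 1\<close>,
  and \<open>\<epsilon>\<^sub>s(S z) = z\<close> for \<open>z \<in> N\<^sub>s\<close> (\<open>N\<^sub>s\<close> commutes with \<open>S(N\<^sub>s)\<close>), read through
  \<open>\<epsilon>\<^sub>s(z) = (id \<otimes> \<epsilon>)((1 \<otimes> z)e)\<close>, gives \<open>\<Sum>\<^sub>y C\<^sub>x\<^sub>y \<epsilon>(S(f\<^sub>w) S(f\<^sub>y)) = \<delta>\<^sub>x\<^sub>w\<close>.
  The matrix unit relations turn these into \<open>\<epsilon>(S f\<^sup>\<alpha>\<^sub>q\<^sub>v) = n\<^sub>\<alpha> \<delta>\<^sub>q\<^sub>v\<close> and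
  \<open>C = 1/n\<^sub>\<alpha>\<close> on the pairs \<open>(f\<^sup>\<alpha>\<^sub>p\<^sub>q, f\<^sup>\<alpha>\<^sub>q\<^sub>p)\<close>, \<open>C = 0\<close> elsewhere.\<close>

section \<open>Coordinate linear algebra\<close>

lemma sum_fun_apply: "(\<Sum>i\<in>A. f i) x = (\<Sum>i\<in>A. f i x)"
  by (induction A rule: infinite_finite_induct) auto

lemma sc_apply: "sc a x k = a * x k"
  by (simp add: sc_def)

lemma bv_apply: "bv i k = (if k = i then 1 else 0)"
  by (simp add: bv_def)

lemma tens_apply [simp]: "tens x y (i, j) = x i * y j"
  by (simp add: tens_def)

lemma mult_if_one_zero [simp]:
  "(a::complex) * (if P then 1 else 0) = (if P then a else 0)"
  "(if P then 1 else 0) * (a::complex) = (if P then a else 0)"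
  by auto

lemma bv_expansion: "x = (\<Sum>i\<in>UNIV. sc (x i) (bv i))" for x :: "'a::finite \<Rightarrow> complex"
  by (rule ext) (simp add: sum_fun_apply bv_apply sc_apply)

lemma sc_add_right: "sc a (x + y) = sc a x + sc a y"
  by (rule ext) (simp add: algebra_simps sc_apply)

lemma sc_add_left: "sc (a + b) x = sc a x + sc b x"
  by (rule ext) (simp add: algebra_simps sc_apply)

lemma sc_sc: "sc a (sc b x) = sc (a * b) x"
  by (rule ext) (simp add: sc_apply)

lemma sc_sum_right: "sc a (\<Sum>i\<in>A. f i) = (\<Sum>i\<in>A. sc a (f i))"
  by (rule ext) (simp add: sum_fun_apply sum_distrib_left sc_apply)

lemma sc_sum_left: "sc (\<Sum>i\<in>A. g i) x = (\<Sum>i\<in>A. sc (g i) x)"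
  by (rule ext) (simp add: sum_fun_apply sum_distrib_right sc_apply)

lemma sc_zero [simp]: "sc 0 x = 0" "sc a 0 = 0"
  by (rule ext, simp add: sc_apply)+

lemma sc_one [simp]: "sc 1 x = x"
  by (rule ext) (simp add: sc_apply)

lemma tens_bv: "tens (bv i) (bv j) = bv (i, j)"
  unfolding bv_def tens_def by (auto intro!: ext)

lemma clin_add: "clin F \<Longrightarrow> F (x + y) = F x + F y"
  by (simp add: clin_def)

lemma clin_sc: "clin F \<Longrightarrow> F (sc a x) = sc a (F x)"
  by (simp add: clin_def)

lemma clin_zero: "clin F \<Longrightarrow> F 0 = 0"
  using clin_sc[of F 0 0] by simp

lemma clin_sum: "clin F \<Longrightarrow> F (\<Sum>i\<in>A. g i) = (\<Sum>i\<in>A. F (g i))"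
  by (induction A rule: infinite_finite_induct) (auto simp: clin_zero clin_add)

lemma clin_double_sum:
  "clin F \<Longrightarrow> F (\<Sum>x\<in>A. \<Sum>y\<in>B. sc (c x y) (g x y)) = (\<Sum>x\<in>A. \<Sum>y\<in>B. sc (c x y) (F (g x y)))"
  by (simp add: clin_sum clin_sc)

lemma clin_bv_expansion: "clin F \<Longrightarrow> F x = (\<Sum>i\<in>UNIV. sc (x i) (F (bv i)))"
  for x :: "'a::finite \<Rightarrow> complex"
  by (subst bv_expansion[of x]) (simp add: clin_sum clin_sc)

lemma clin_eq_on_bv: "clin F \<Longrightarrow> clin G \<Longrightarrow> (\<And>i. F (bv i) = G (bv i)) \<Longrightarrow> F x = G x"
  for x :: "'a::finite \<Rightarrow> complex"
  by (simp add: clin_bv_expansion[of F x] clin_bv_expansion[of G x])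

lemma clin_id: "clin (\<lambda>x. x)" "clin id"
  by (simp_all add: clin_def)

lemma clin_comp: "clin F \<Longrightarrow> clin G \<Longrightarrow> clin (\<lambda>x. F (G x))"
  by (simp add: clin_def)

lemma clin_sc_fun: "clin F \<Longrightarrow> clin (\<lambda>x. sc c (F x))"
  by (simp add: clin_def sc_add_right sc_sc mult.commute)

lemma clin_tens_left: "clin (\<lambda>x. tens x y)"
  unfolding clin_def by (auto intro!: ext simp: tens_def algebra_simps sc_apply)

lemma clin_tens_right: "clin (\<lambda>y. tens x y)"
  unfolding clin_def by (auto intro!: ext simp: tens_def algebra_simps sc_apply)

lemma clin_eq_on_tens:
  "clin F \<Longrightarrow> clin G \<Longrightarrow> (\<And>x y. F (tens x y) = G (tens x y)) \<Longrightarrow> F z = G z"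
  for z :: "'a::finite \<times> 'b::finite \<Rightarrow> complex"
  by (rule clin_eq_on_bv) (auto simp: tens_bv[symmetric])

lemma clin2_eq_on_tens:
  fixes F G :: "('a::finite \<times> 'b::finite \<Rightarrow> complex) \<Rightarrow> ('c::finite \<times> 'd::finite \<Rightarrow> complex)
      \<Rightarrow> ('e \<Rightarrow> complex)"
  assumes "\<And>w. clin (\<lambda>z. F z w)" "\<And>w. clin (\<lambda>z. G z w)" "\<And>z. clin (F z)" "\<And>z. clin (G z)"
    and "\<And>a b c d. F (tens a b) (tens c d) = G (tens a b) (tens c d)"
  shows "F z w = G z w"
proof -
  have "F (tens a b) w = G (tens a b) w" for a b
    by (rule clin_eq_on_tens[OF assms(3,4)]) (rule assms(5))
  then show ?thesis
    by (rule clin_eq_on_tens[OF assms(1,2)])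
qed

lemma antilin_add: "antilin F \<Longrightarrow> F (x + y) = F x + F y"
  by (simp add: antilin_def)

lemma antilin_sc: "antilin F \<Longrightarrow> F (sc a x) = sc (cnj a) (F x)"
  by (simp add: antilin_def)

lemma antilin_zero: "antilin F \<Longrightarrow> F 0 = 0"
  using antilin_sc[of F 0 0] by simp

lemma antilin_sum: "antilin F \<Longrightarrow> F (\<Sum>i\<in>A. g i) = (\<Sum>i\<in>A. F (g i))"
  by (induction A rule: infinite_finite_induct) (auto simp: antilin_zero antilin_add)

lemma antilin_eq_on_bv: "antilin F \<Longrightarrow> antilin G \<Longrightarrow> (\<And>i. F (bv i) = G (bv i)) \<Longrightarrow> F x = G x"
  for x :: "'a::finite \<Rightarrow> complex"
  by (subst (1 2) bv_expansion[of x]) (simp add: antilin_sum antilin_sc)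

lemma antilin_eq_on_tens:
  "antilin F \<Longrightarrow> antilin G \<Longrightarrow> (\<And>x y. F (tens x y) = G (tens x y)) \<Longrightarrow> F z = G z"
  for z :: "'a::finite \<times> 'b::finite \<Rightarrow> complex"
  by (rule antilin_eq_on_bv) (auto simp: tens_bv[symmetric])

lemma antilin_comp_clin_antilin: "clin F \<Longrightarrow> antilin G \<Longrightarrow> antilin (\<lambda>x. F (G x))"
  by (simp add: clin_def antilin_def)

lemma antilin_comp_antilin_clin: "antilin F \<Longrightarrow> clin G \<Longrightarrow> antilin (\<lambda>x. F (G x))"
  by (simp add: clin_def antilin_def)

lemma lfunctional_add: "lfunctional \<phi> \<Longrightarrow> \<phi> (x + y) = \<phi> x + \<phi> y"
  by (simp add: lfunctional_def)

lemma lfunctional_sc: "lfunctional \<phi> \<Longrightarrow> \<phi> (sc a x) = a * \<phi> x"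
  by (simp add: lfunctional_def)

lemma lfunctional_zero: "lfunctional \<phi> \<Longrightarrow> \<phi> 0 = 0"
  using lfunctional_sc[of \<phi> 0 0] by simp

lemma lfunctional_sum: "lfunctional \<phi> \<Longrightarrow> \<phi> (\<Sum>i\<in>A. g i) = (\<Sum>i\<in>A. \<phi> (g i))"
  by (induction A rule: infinite_finite_induct) (auto simp: lfunctional_zero lfunctional_add)

lemma clin_sc_lfunctional: "lfunctional \<phi> \<Longrightarrow> clin (\<lambda>b. sc (\<phi> b) a)"
  by (simp add: clin_def lfunctional_add lfunctional_sc sc_add_left sc_sc)

section \<open>Tensor products in coordinates\<close>

definition row :: "('a \<times> 'b \<Rightarrow> complex) \<Rightarrow> 'a \<Rightarrow> ('b \<Rightarrow> complex)" where
  "row z i = (\<lambda>j. z (i, j))"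

definition col :: "('a \<times> 'b \<Rightarrow> complex) \<Rightarrow> 'b \<Rightarrow> ('a \<Rightarrow> complex)" where
  "col z j = (\<lambda>i. z (i, j))"

lemma clin_row: "clin (\<lambda>z. row z i)"
  by (auto simp: clin_def row_def sc_apply)

lemma clin_col: "clin (\<lambda>z. col z j)"
  by (auto simp: clin_def col_def sc_apply)

lemma row_tens: "row (tens a b) i = sc (a i) b"
  by (auto simp: row_def sc_def)

lemma col_tens: "col (tens a b) j = sc (b j) a"
  by (auto simp: col_def sc_def)

lemma tensor_row_expansion: "z = (\<Sum>i\<in>UNIV. tens (bv i) (row z i))"
  for z :: "'a::finite \<times> 'b \<Rightarrow> complex"
  by (rule ext) (auto simp: sum_fun_apply bv_apply row_def)

lemma tensor_col_expansion: "z = (\<Sum>j\<in>UNIV. tens (col z j) (bv j))"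
  for z :: "'a \<times> 'b::finite \<Rightarrow> complex"
  by (rule ext) (auto simp: sum_fun_apply bv_apply col_def)

lemma clin_tmap: "clin (tmap F G)"
  unfolding clin_def tmap_def by (auto simp: sc_add_left sum.distrib sc_sc sc_sum_right sc_apply)

lemma tmap_bv: "tmap F G (bv p) = tens (F (bv (fst p))) (G (bv (snd p)))"
  unfolding tmap_def bv_apply by (simp add: if_distrib[of "\<lambda>c. sc c _"] cong: if_cong)

lemma tmap_tens:
  assumes "clin F" and "clin G"
  shows "tmap F G (tens x y) = tens (F x) (G y)"
proof -
  have "tmap F G (tens x (bv j)) = tens (F x) (G (bv j))" for j
    by (rule clin_eq_on_bv[OF clin_comp[OF clin_tmap clin_tens_left]
          clin_comp[OF clin_tens_left \<open>clin F\<close>]]) (simp add: tens_bv tmap_bv)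
  then show ?thesis
    by (rule clin_eq_on_bv[OF clin_comp[OF clin_tmap clin_tens_right]
          clin_comp[OF clin_tens_right \<open>clin G\<close>]])
qed

lemma tmap_comp:
  assumes "clin F" "clin G" "clin F'" "clin G'"
  shows "tmap F G (tmap F' G' z) = tmap (\<lambda>x. F (F' x)) (\<lambda>x. G (G' x)) z"
  by (rule clin_eq_on_tens[OF clin_comp[OF clin_tmap clin_tmap] clin_tmap])
     (simp add: tmap_tens assms clin_comp)

lemma tmap_id_id: "tmap (\<lambda>x. x) (\<lambda>x. x) z = z"
  by (rule clin_eq_on_tens[OF clin_tmap clin_id(1)]) (simp add: tmap_tens clin_id)

lemma row_tmap_id_left: "clin G \<Longrightarrow> row (tmap id G z) i = G (row z i)"
  by (rule clin_eq_on_tens[OF clin_comp[OF clin_row clin_tmap] clin_comp[OF _ clin_row]])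
     (simp_all add: tmap_tens clin_id row_tens clin_sc)

lemma col_tmap_id_right: "clin G \<Longrightarrow> col (tmap G id z) j = G (col z j)"
  by (rule clin_eq_on_tens[OF clin_comp[OF clin_col clin_tmap] clin_comp[OF _ clin_col]])
     (simp_all add: tmap_tens clin_id col_tens clin_sc)

lemma tmap_id_right_apply: "clin G \<Longrightarrow> tmap G id z (i, j) = (\<Sum>a\<in>UNIV. z (a, j) * G (bv a) i)"
  using col_tmap_id_right[of G z j]
  by (simp add: col_def fun_eq_iff clin_bv_expansion[of G "\<lambda>i. z (i, j)"] sum_fun_apply sc_apply)

definition cbilinear :: "(('a \<Rightarrow> complex) \<Rightarrow> ('a \<Rightarrow> complex) \<Rightarrow> ('a \<Rightarrow> complex)) \<Rightarrow> bool" where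
  "cbilinear m \<longleftrightarrow> (\<forall>x. clin (m x)) \<and> (\<forall>y. clin (\<lambda>x. m x y))"

lemma cbilinearD: "cbilinear m \<Longrightarrow> clin (m x)" "cbilinear m \<Longrightarrow> clin (\<lambda>x. m x y)"
  by (auto simp: cbilinear_def)

lemma clin_tmult_left: "clin (\<lambda>z. tmult m z w)"
  unfolding clin_def tmult_def
  by (auto simp: sc_add_left sum.distrib sc_sc sc_sum_right sc_apply algebra_simps)

lemma clin_tmult_right: "clin (tmult m z)"
  unfolding clin_def tmult_def
  by (auto simp: sc_add_left sum.distrib sc_sc sc_sum_right sc_apply algebra_simps)

lemma tmult_bv:
  "tmult m (bv p) (bv q) = tens (m (bv (fst p)) (bv (fst q))) (m (bv (snd p)) (bv (snd q)))"
  unfolding tmult_def bv_apply by (simp add: if_distrib[of "\<lambda>c. sc c _"] cong: if_cong)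

lemma tmult_tens:
  assumes m: "cbilinear m"
  shows "tmult m (tens a b) (tens c d) = tens (m a c) (m b d)"
proof -
  note m1 = cbilinearD(1)[OF m] and m2 = cbilinearD(2)[OF m]
  have "tmult m (tens a (bv j)) (tens (bv k) (bv l)) = tens (m a (bv k)) (m (bv j) (bv l))" for a j k l
    by (rule clin_eq_on_bv[OF clin_comp[OF clin_tmult_left clin_tens_left] clin_comp[OF clin_tens_left m2]])
       (simp add: tens_bv tmult_bv)
  then have "tmult m (tens a b) (tens (bv k) (bv l)) = tens (m a (bv k)) (m b (bv l))" for k l
    by (rule clin_eq_on_bv[OF clin_comp[OF clin_tmult_left clin_tens_right] clin_comp[OF clin_tens_right m2]])
  then have "tmult m (tens a b) (tens c (bv l)) = tens (m a c) (m b (bv l))" for l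
    by (rule clin_eq_on_bv[OF clin_comp[OF clin_tmult_right clin_tens_left] clin_comp[OF clin_tens_left m1]])
  then show ?thesis
    by (rule clin_eq_on_bv[OF clin_comp[OF clin_tmult_right clin_tens_right] clin_comp[OF clin_tens_right m1]])
qed

lemma tmult_assoc:
  assumes m: "cbilinear m" and assoc: "\<And>x y z. m (m x y) z = m x (m y z)"
  shows "tmult m (tmult m z w) v = tmult m z (tmult m w v)"
proof -
  have "tmult m (tmult m (tens a b) (tens c d)) v = tmult m (tens a b) (tmult m (tens c d) v)" for a b c d
    by (rule clin_eq_on_tens[OF clin_tmult_right clin_comp[OF clin_tmult_right clin_tmult_right]])
       (simp add: tmult_tens[OF m] assoc)
  then have "tmult m (tmult m (tens a b) w) v = tmult m (tens a b) (tmult m w v)" for a b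
    by (rule clin_eq_on_tens[OF clin_comp[OF clin_tmult_left clin_tmult_right]
          clin_comp[OF clin_tmult_right clin_tmult_left]])
  then show ?thesis
    by (rule clin_eq_on_tens[OF clin_comp[OF clin_tmult_left clin_tmult_left] clin_tmult_left])
qed

lemma tmult_tens_one:
  assumes m: "cbilinear m" and "\<And>x. m one x = x" "\<And>x. m x one = x"
  shows "tmult m (tens one one) z = z" "tmult m z (tens one one) = z"
  by (rule clin_eq_on_tens[OF clin_tmult_right clin_id(1)], simp add: tmult_tens[OF m] assms)
     (rule clin_eq_on_tens[OF clin_tmult_left clin_id(1)], simp add: tmult_tens[OF m] assms)

lemma tmap_tmult_antimult:
  assumes m: "cbilinear m" and S: "clin S" and "\<And>x y. S (m x y) = m (S y) (S x)"
  shows "tmap S S (tmult m z w) = tmult m (tmap S S w) (tmap S S z)"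
  by (rule clin2_eq_on_tens[of "\<lambda>z w. tmap S S (tmult m z w)" "\<lambda>z w. tmult m (tmap S S w) (tmap S S z)",
        OF clin_comp[OF clin_tmap clin_tmult_left] clin_comp[OF clin_tmult_right clin_tmap]
        clin_comp[OF clin_tmap clin_tmult_right] clin_comp[OF clin_tmult_left clin_tmap]])
     (simp add: tmult_tens[OF m] tmap_tens[OF S S] assms)

lemma row_tmult_tens_one_left:
  assumes m: "cbilinear m" and "\<And>y. m one y = y"
  shows "row (tmult m (tens one x) z) i = m x (row z i)"
  by (rule clin_eq_on_tens[OF clin_comp[OF clin_row clin_tmult_right] clin_comp[OF cbilinearD(1)[OF m] clin_row]])
     (simp add: tmult_tens[OF m] assms row_tens clin_sc[OF cbilinearD(1)[OF m]])

lemma col_tmult_tens_one_right: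
  assumes m: "cbilinear m" and "\<And>y. m y one = y"
  shows "col (tmult m z (tens y one)) j = m (col z j) y"
  by (rule clin_eq_on_tens[OF clin_comp[OF clin_col clin_tmult_left] clin_comp[OF cbilinearD(2)[OF m] clin_col]])
     (simp add: tmult_tens[OF m] assms col_tens clin_sc[OF cbilinearD(2)[OF m]])

lemma antilin_tstar: "antilin (tstar st)"
  unfolding antilin_def tstar_def
  by (simp add: sc_add_left sum.distrib sc_sum_right sc_sc sc_apply)

lemma tstar_bv: "tstar st (bv p) = tens (st (bv (fst p))) (st (bv (snd p)))"
  unfolding tstar_def bv_apply by (simp add: if_distrib[of "\<lambda>c. sc (cnj c) _"] cong: if_cong)

lemma tstar_tens:
  assumes st: "antilin st"
  shows "tstar st (tens a b) = tens (st a) (st b)"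
proof -
  have "tstar st (tens x (bv j)) = tens (st x) (st (bv j))" for x j
    by (rule antilin_eq_on_bv[OF antilin_comp_antilin_clin[OF antilin_tstar clin_tens_left]
          antilin_comp_clin_antilin[OF clin_tens_left st]]) (simp add: tens_bv tstar_bv)
  then show ?thesis
    by (rule antilin_eq_on_bv[OF antilin_comp_antilin_clin[OF antilin_tstar clin_tens_right]
          antilin_comp_clin_antilin[OF clin_tens_right st]])
qed

lemma tstar_tmult:
  assumes m: "cbilinear m" and st: "antilin st" and "\<And>x y. st (m x y) = m (st y) (st x)"
  shows "tstar st (tmult m z w) = tmult m (tstar st w) (tstar st z)"
proof -
  have "tstar st (tmult m (tens a b) w) = tmult m (tstar st w) (tstar st (tens a b))" for a b
    by (rule antilin_eq_on_tens[OF antilin_comp_antilin_clin[OF antilin_tstar clin_tmult_right]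
          antilin_comp_clin_antilin[OF clin_tmult_left antilin_tstar]])
       (simp add: tmult_tens[OF m] tstar_tens[OF st] assms)
  then show ?thesis
    by (rule antilin_eq_on_tens[OF antilin_comp_antilin_clin[OF antilin_tstar clin_tmult_left]
          antilin_comp_clin_antilin[OF clin_tmult_right antilin_tstar]])
qed

lemma clin_flip: "clin flip"
  by (auto simp: clin_def flip_def sc_def)

lemma flip_tens: "flip (tens a b) = tens b a"
  by (auto simp: flip_def tens_def)

lemma flip_flip: "flip (flip z) = z"
  by (auto simp: flip_def)

lemma flip_tmult:
  assumes m: "cbilinear m"
  shows "flip (tmult m z w) = tmult m (flip z) (flip w)"
  by (rule clin2_eq_on_tens[of "\<lambda>z w. flip (tmult m z w)" "\<lambda>z w. tmult m (flip z) (flip w)",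
        OF clin_comp[OF clin_flip clin_tmult_left] clin_comp[OF clin_tmult_left clin_flip]
        clin_comp[OF clin_flip clin_tmult_right] clin_comp[OF clin_tmult_right clin_flip]])
     (simp add: tmult_tens[OF m] flip_tens)

lemma flip_tmap: "clin F \<Longrightarrow> clin G \<Longrightarrow> flip (tmap F G z) = tmap G F (flip z)"
  by (rule clin_eq_on_tens[OF clin_comp[OF clin_flip clin_tmap] clin_comp[OF clin_tmap clin_flip]])
     (simp add: tmap_tens flip_tens)

lemma clin_rslice: "clin (rslice \<phi>)"
  unfolding clin_def rslice_def
  by (simp add: sc_add_left sum.distrib distrib_right sc_sum_right sc_sc sc_apply mult.assoc)

lemma rslice_bv: "rslice \<phi> (bv p) = sc (\<phi> (bv (snd p))) (bv (fst p))"
  unfolding rslice_def by (simp add: bv_apply[of p] if_distrib[of "\<lambda>c. sc c _"] cong: if_cong)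

lemma rslice_tens:
  assumes \<phi>: "lfunctional \<phi>"
  shows "rslice \<phi> (tens a b) = sc (\<phi> b) a"
proof -
  have "rslice \<phi> (tens x (bv j)) = sc (\<phi> (bv j)) x" for x j
    by (rule clin_eq_on_bv[OF clin_comp[OF clin_rslice clin_tens_left] clin_sc_fun[OF clin_id(1)]])
       (simp add: tens_bv rslice_bv)
  then show ?thesis
    by (rule clin_eq_on_bv[OF clin_comp[OF clin_rslice clin_tens_right] clin_sc_lfunctional[OF \<phi>]])
qed

lemma rslice_tmap_id_right:
  assumes \<phi>: "lfunctional \<phi>" and G: "clin G"
  shows "rslice \<phi> (tmap G id z) = G (rslice \<phi> z)"
  by (rule clin_eq_on_tens[OF clin_comp[OF clin_rslice clin_tmap] clin_comp[OF G clin_rslice]])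
     (simp add: tmap_tens[OF G clin_id(2)] rslice_tens[OF \<phi>] clin_sc[OF G])

lemma lslice_row_sum: "lslice \<phi> z = (\<Sum>i\<in>UNIV. sc (\<phi> (bv i)) (row z i))"
proof -
  have "row z i = (\<Sum>j\<in>UNIV. sc (z (i, j)) (bv j))" for i
    by (subst bv_expansion[of "row z i"]) (simp add: row_def)
  then show ?thesis
    by (simp add: lslice_def sc_sum_right sc_sc sum.cartesian_product split_beta mult.commute
        flip: UNIV_Times_UNIV)
qed

lemma lslice_col_sum:
  assumes "lfunctional \<phi>"
  shows "lslice \<phi> z = (\<Sum>j\<in>UNIV. sc (\<phi> (col z j)) (bv j))"
proof (rule ext)
  fix k
  have "\<phi> (col z k) = (\<Sum>i\<in>UNIV. z (i, k) * \<phi> (bv i))"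
    by (subst bv_expansion[of "col z k"]) (simp add: lfunctional_sum[OF assms] lfunctional_sc[OF assms] col_def)
  then show "lslice \<phi> z k = (\<Sum>j\<in>UNIV. sc (\<phi> (col z j)) (bv j)) k"
    by (simp add: lslice_row_sum sum_fun_apply sc_apply bv_apply row_def mult.commute)
qed

lemma tensor_expansion_left:
  assumes \<phi>: "\<And>x. lfunctional (\<phi> x)" and cols: "\<And>j. col z j = (\<Sum>x\<in>X. sc (\<phi> x (col z j)) (u x))"
  shows "z = (\<Sum>x\<in>X. tens (u x) (lslice (\<phi> x) z))"
proof -
  have "z = (\<Sum>j\<in>UNIV. \<Sum>x\<in>X. sc (\<phi> x (col z j)) (tens (u x) (bv j)))"
    by (subst tensor_col_expansion, subst cols) (simp add: clin_sum[OF clin_tens_left] clin_sc[OF clin_tens_left])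
  also have "\<dots> = (\<Sum>x\<in>X. tens (u x) (\<Sum>j\<in>UNIV. sc (\<phi> x (col z j)) (bv j)))"
    by (subst sum.swap) (simp add: clin_sum[OF clin_tens_right] clin_sc[OF clin_tens_right])
  finally show ?thesis
    by (simp add: lslice_col_sum[OF \<phi>])
qed

lemma clin_tmu: "clin (tmu m)"
  unfolding clin_def tmu_def by (simp add: sc_add_left sum.distrib sc_sum_right sc_sc sc_apply)

lemma tmu_bv: "tmu m (bv p) = m (bv (fst p)) (bv (snd p))"
  unfolding tmu_def bv_apply by (simp add: if_distrib[of "\<lambda>c. sc c _"] cong: if_cong)

lemma tmu_tens:
  assumes m: "cbilinear m"
  shows "tmu m (tens a b) = m a b"
proof -
  have "tmu m (tens x (bv j)) = m x (bv j)" for x j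
    by (rule clin_eq_on_bv[OF clin_comp[OF clin_tmu clin_tens_left] cbilinearD(2)[OF m]])
       (simp add: tens_bv tmu_bv)
  then show ?thesis
    by (rule clin_eq_on_bv[OF clin_comp[OF clin_tmu clin_tens_right] cbilinearD(1)[OF m]])
qed

section \<open>Weak Kac algebras\<close>

locale weak_kac =
  fixes mult :: "('i::finite \<Rightarrow> complex) \<Rightarrow> ('i \<Rightarrow> complex) \<Rightarrow> ('i \<Rightarrow> complex)"
    and star :: "('i \<Rightarrow> complex) \<Rightarrow> ('i \<Rightarrow> complex)"
    and one :: "'i \<Rightarrow> complex"
    and \<Delta> :: "('i \<Rightarrow> complex) \<Rightarrow> ('i \<times> 'i \<Rightarrow> complex)"
    and S :: "('i \<Rightarrow> complex) \<Rightarrow> ('i \<Rightarrow> complex)"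
    and \<epsilon> :: "('i \<Rightarrow> complex) \<Rightarrow> complex"
  assumes weak_kac: "weak_kac_algebra mult star one \<Delta> S \<epsilon>"
begin

abbreviation e :: "'i \<times> 'i \<Rightarrow> complex" where
  "e \<equiv> \<Delta> one"

abbreviation Ns :: "('i \<Rightarrow> complex) set" where
  "Ns \<equiv> source_cartan mult one \<Delta>"

definition target_cartan :: "('i \<Rightarrow> complex) set" where
  "target_cartan = {y. \<Delta> y = tmult mult e (tens y one) \<and> \<Delta> y = tmult mult (tens y one) e}"

definition eps_s :: "('i \<Rightarrow> complex) \<Rightarrow> ('i \<Rightarrow> complex)" where
  "eps_s z = tmu mult (tmap S id (\<Delta> z))"

lemma cstar: "fd_cstar_algebra mult star one"
  using weak_kac by (simp add: weak_kac_algebra_def)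

lemma cbilinear_mult: "cbilinear mult"
  using cstar by (simp add: fd_cstar_algebra_def cbilinear_def)

lemma clin_mult_right: "clin (mult x)"
  and clin_mult_left: "clin (\<lambda>x. mult x y)"
  using cbilinear_mult by (auto simp: cbilinear_def)

lemma mult_assoc: "mult (mult x y) z = mult x (mult y z)"
  and mult_one_left: "mult one x = x"
  and mult_one_right: "mult x one = x"
  and antilin_star: "antilin star"
  and star_star: "star (star x) = x"
  and star_mult: "star (mult x y) = mult (star y) (star x)"
  using cstar by (simp_all add: fd_cstar_algebra_def)

lemma mult_zero: "mult x 0 = 0" "mult 0 x = 0"
  by (simp_all add: clin_zero[OF clin_mult_right] clin_zero[OF clin_mult_left])

lemma clin_Delta: "clin \<Delta>"
  and inj_Delta: "inj \<Delta>"
  and Delta_mult: "\<Delta> (mult x y) = tmult mult (\<Delta> x) (\<Delta> y)"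
  and Delta_star: "\<Delta> (star x) = tstar star (\<Delta> x)"
  and Delta_coassoc: "reassoc (tmap \<Delta> id (\<Delta> x)) = tmap id \<Delta> (\<Delta> x)"
  and clin_S: "clin S"
  and S_one: "S one = one"
  and S_mult: "S (mult x y) = mult (S y) (S x)"
  and S_S: "S (S x) = x"
  and tmap_S_S_Delta: "tmap S S (\<Delta> x) = flip (\<Delta> (S x))"
  and lfunctional_eps: "lfunctional \<epsilon>"
  and rslice_eps_Delta: "rslice \<epsilon> (\<Delta> x) = x"
  and tmap_eps_s_Delta: "tmap eps_s id (\<Delta> x) = tmult mult (tens one x) e"
  using weak_kac by (simp_all add: weak_kac_algebra_def eps_s_def[abs_def])

lemma clin_eps_s: "clin eps_s"
  unfolding eps_s_def[abs_def] by (rule clin_comp[OF clin_tmu clin_comp[OF clin_tmap clin_Delta]])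

lemma star_one: "star one = one"
  using star_mult[of "star one" one] by (simp add: star_star mult_one_left mult_one_right)

lemma tstar_e: "tstar star e = e"
  using Delta_star[of one] by (simp add: star_one)

lemma tmap_S_S_e: "tmap S S e = flip e"
  using tmap_S_S_Delta[of one] by (simp add: S_one)

lemma tmap_eps_s_e: "tmap eps_s id e = e"
  using tmap_eps_s_Delta[of one] by (simp add: tmult_tens_one[OF cbilinear_mult mult_one_left mult_one_right])

lemma eps_s_eq_rslice: "eps_s z = rslice \<epsilon> (tmult mult (tens one z) e)"
  using rslice_tmap_id_right[OF lfunctional_eps clin_eps_s, of "\<Delta> z"]
  by (simp add: tmap_eps_s_Delta rslice_eps_Delta)

lemma eps_s_one: "eps_s one = one"
  using eps_s_eq_rslice[of one]
  by (simp add: tmult_tens_one[OF cbilinear_mult mult_one_left mult_one_right] rslice_eps_Delta)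

lemma row_e_eps_s_expansion: "row e i = (\<Sum>a\<in>UNIV. sc (eps_s (bv a) i) (row e a))"
proof (rule ext)
  fix b
  have "row e i b = tmap eps_s id e (i, b)"
    by (simp add: row_def tmap_eps_s_e)
  also have "\<dots> = (\<Sum>a\<in>UNIV. e (a, b) * eps_s (bv a) i)"
    by (rule tmap_id_right_apply[OF clin_eps_s])
  finally show "row e i b = (\<Sum>a\<in>UNIV. sc (eps_s (bv a) i) (row e a)) b"
    by (simp add: sum_fun_apply sc_apply row_def mult.commute)
qed

lemma row_e_star_expansion: "row e i = (\<Sum>a\<in>UNIV. sc (star (bv a) i) (star (row e a)))"
proof -
  have "e = (\<Sum>a\<in>UNIV. tens (star (bv a)) (star (row e a)))"
    by (subst (1 2) tstar_e[symmetric], subst (2) tensor_row_expansion)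
       (simp add: antilin_sum[OF antilin_tstar] tstar_tens[OF antilin_star] tstar_e)
  then have "row e i = row (\<Sum>a\<in>UNIV. tens (star (bv a)) (star (row e a))) i"
    by simp
  then show ?thesis
    by (simp add: clin_sum[OF clin_row] row_tens)
qed

lemma Delta_row_e_apply: "\<Delta> (row e i) (j, k) = \<Delta> (col e k) (i, j)"
proof -
  have "\<Delta> (row e i) (j, k) = row (tmap id \<Delta> e) i (j, k)"
    by (simp add: row_tmap_id_left[OF clin_Delta])
  also have "\<dots> = reassoc (tmap \<Delta> id e) (i, (j, k))"
    by (simp add: row_def Delta_coassoc)
  also have "\<dots> = col (tmap \<Delta> id e) k (i, j)"
    by (simp add: reassoc_def col_def)
  also have "\<dots> = \<Delta> (col e k) (i, j)"
    by (simp add: col_tmap_id_right[OF clin_Delta])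
  finally show ?thesis .
qed

lemma Delta_row_e_left: "\<Delta> (row e i) = tmult mult e (tens (row e i) one)"
proof (rule ext, clarify)
  fix j k
  have "\<Delta> (row e i) (j, k) = (\<Sum>a\<in>UNIV. eps_s (bv a) i * \<Delta> (row e a) (j, k))"
    by (subst row_e_eps_s_expansion) (simp add: clin_sum[OF clin_Delta] clin_sc[OF clin_Delta] sum_fun_apply sc_apply)
  also have "\<dots> = tmap eps_s id (\<Delta> (col e k)) (i, j)"
    by (simp add: Delta_row_e_apply tmap_id_right_apply[OF clin_eps_s] mult.commute)
  also have "\<dots> = row (tmult mult (tens one (col e k)) e) i j"
    by (simp add: tmap_eps_s_Delta row_def)
  also have "\<dots> = col (tmult mult e (tens (row e i) one)) k j"
    by (simp add: row_tmult_tens_one_left[OF cbilinear_mult mult_one_left]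
        col_tmult_tens_one_right[OF cbilinear_mult mult_one_right])
  finally show "\<Delta> (row e i) (j, k) = tmult mult e (tens (row e i) one) (j, k)"
    by (simp add: col_def)
qed

lemma Delta_row_e_right: "\<Delta> (row e i) = tmult mult (tens (row e i) one) e"
proof -
  \<comment> \<open>\<open>e\<close> is self-adjoint, so the adjoints of its right legs span them again.\<close>
  have L: "clin (\<lambda>y. tmult mult (tens y one) e)"
    by (rule clin_comp[OF clin_tmult_left clin_tens_left])
  have Delta_star_row: "\<Delta> (star (row e a)) = tmult mult (tens (star (row e a)) one) e" for a
    using Delta_row_e_left[of a]
    by (simp add: Delta_star tstar_tmult[OF cbilinear_mult antilin_star star_mult]
        tstar_tens[OF antilin_star] star_one tstar_e)
  have "\<Delta> (row e i) = (\<Sum>a\<in>UNIV. sc (star (bv a) i) (\<Delta> (star (row e a))))"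
    by (subst row_e_star_expansion) (simp add: clin_sum[OF clin_Delta] clin_sc[OF clin_Delta])
  also have "\<dots> = tmult mult (tens (\<Sum>a\<in>UNIV. sc (star (bv a) i) (star (row e a))) one) e"
    by (simp add: Delta_star_row clin_sum[OF L] clin_sc[OF L])
  finally show ?thesis
    by (simp only: row_e_star_expansion[symmetric])
qed

lemma row_e_in_target_cartan: "row e i \<in> target_cartan"
  unfolding target_cartan_def using Delta_row_e_left Delta_row_e_right by blast

lemma Delta_S: "\<Delta> (S y) = tmap S S (flip (\<Delta> y))"
proof -
  have "tmap S S (tmap S S z) = z" for z
    by (simp add: tmap_comp[OF clin_S clin_S clin_S clin_S] S_S tmap_id_id)
  then show ?thesis
    by (metis S_S tmap_S_S_Delta)
qed

lemma tmap_S_S_flip_tmult: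
  "tmap S S (flip (tmult mult z w)) = tmult mult (tmap S S (flip w)) (tmap S S (flip z))"
  by (simp add: flip_tmult[OF cbilinear_mult] tmap_tmult_antimult[OF cbilinear_mult clin_S S_mult])

lemma tmap_S_S_flip_tens: "tmap S S (flip (tens a b)) = tens (S b) (S a)"
  by (simp add: flip_tens tmap_tens[OF clin_S clin_S])

lemma tmap_S_S_flip_e: "tmap S S (flip e) = e"
  by (simp add: flip_tmap[OF clin_S clin_S, symmetric] tmap_S_S_e flip_flip)

lemmas Delta_S_simps = Delta_S tmap_S_S_flip_tmult tmap_S_S_flip_tens tmap_S_S_flip_e S_one

lemma source_cartanD:
  "x \<in> Ns \<Longrightarrow> \<Delta> x = tmult mult e (tens one x)" "x \<in> Ns \<Longrightarrow> \<Delta> x = tmult mult (tens one x) e"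
  unfolding source_cartan_def by blast+

lemma S_target_cartan:
  assumes "y \<in> target_cartan"
  shows "S y \<in> Ns"
proof -
  have left: "\<Delta> y = tmult mult e (tens y one)" and right: "\<Delta> y = tmult mult (tens y one) e"
    using assms unfolding target_cartan_def by blast+
  have "\<Delta> (S y) = tmult mult e (tens one (S y))"
    by (simp add: right Delta_S_simps)
  moreover have "\<Delta> (S y) = tmult mult (tens one (S y)) e"
    by (simp add: left Delta_S_simps)
  ultimately show ?thesis
    unfolding source_cartan_def by blast
qed

lemma Delta_S_source_cartan: "x \<in> Ns \<Longrightarrow> \<Delta> (S x) = tmult mult (tens (S x) one) e"
  by (simp add: source_cartanD(1) Delta_S_simps)

lemma source_cartan_lincomb:
  assumes "\<And>a. a \<in> A \<Longrightarrow> g a \<in> Ns"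
  shows "(\<Sum>a\<in>A. sc (c a) (g a)) \<in> Ns"
proof -
  have lin: "clin (\<lambda>x. tmult mult e (tens one x))" "clin (\<lambda>x. tmult mult (tens one x) e)"
    by (rule clin_comp[OF clin_tmult_right clin_tens_right], rule clin_comp[OF clin_tmult_left clin_tens_right])
  have "\<Delta> (\<Sum>a\<in>A. sc (c a) (g a)) = (\<Sum>a\<in>A. sc (c a) (\<Delta> (g a)))"
    by (simp add: clin_sum[OF clin_Delta] clin_sc[OF clin_Delta])
  then have "\<Delta> (\<Sum>a\<in>A. sc (c a) (g a)) = tmult mult e (tens one (\<Sum>a\<in>A. sc (c a) (g a)))"
    "\<Delta> (\<Sum>a\<in>A. sc (c a) (g a)) = tmult mult (tens one (\<Sum>a\<in>A. sc (c a) (g a))) e"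
    using source_cartanD[OF assms]
    by (simp_all add: clin_sum[OF lin(1)] clin_sc[OF lin(1)] clin_sum[OF lin(2)] clin_sc[OF lin(2)]
        cong: sum.cong)
  then show ?thesis
    unfolding source_cartan_def by blast
qed

lemma col_e_expansion: "col e j = (\<Sum>a\<in>UNIV. sc (S (bv a) j) (S (row e a)))"
proof -
  have "e = flip (tmap S S e)"
    by (simp add: tmap_S_S_e flip_flip)
  also have "\<dots> = (\<Sum>a\<in>UNIV. tens (S (row e a)) (S (bv a)))"
    by (subst tensor_row_expansion)
       (simp add: clin_sum[OF clin_tmap] tmap_tens[OF clin_S clin_S] clin_sum[OF clin_flip] flip_tens)
  finally have "col e j = col (\<Sum>a\<in>UNIV. tens (S (row e a)) (S (bv a))) j"
    by simp
  then show ?thesis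
    by (simp add: clin_sum[OF clin_col] col_tens)
qed

lemma col_e_in_source_cartan: "col e j \<in> Ns"
  by (subst col_e_expansion) (intro source_cartan_lincomb S_target_cartan row_e_in_target_cartan)

lemma source_cartan_commute:
  assumes x: "x \<in> Ns" and y: "\<Delta> y = tmult mult (tens y one) e"
  shows "mult x y = mult y x"
proof -
  note assoc = tmult_assoc[OF cbilinear_mult mult_assoc]
  note Dx = source_cartanD(2)[OF x]
  have e_Delta: "tmult mult e (\<Delta> z) = \<Delta> z" for z
    using Delta_mult[of one z] by (simp add: mult_one_left)
  have "\<Delta> (mult x y) = tmult mult (tmult mult (tens one x) (tens y one)) e"
    by (simp add: Delta_mult Dx assoc e_Delta) (simp add: y assoc)
  moreover have "\<Delta> (mult y x) = tmult mult (tmult mult (tens y one) (tens one x)) e"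
    by (simp add: Delta_mult y assoc e_Delta) (simp add: Dx assoc)
  ultimately have "\<Delta> (mult x y) = \<Delta> (mult y x)"
    by (simp add: tmult_tens[OF cbilinear_mult] mult_one_left mult_one_right)
  then show ?thesis
    by (rule injD[OF inj_Delta])
qed

end

section \<open>Matrix units of the source Cartan subalgebra\<close>

locale weak_kac_matrix_units = weak_kac mult star one \<Delta> S \<epsilon> for mult star one \<Delta> S \<epsilon> +
  fixes K :: nat and n :: "nat \<Rightarrow> nat" and f :: "nat \<Rightarrow> nat \<Rightarrow> nat \<Rightarrow> ('a \<Rightarrow> complex)"
  assumes f_in: "\<forall>\<alpha><K. \<forall>p<n \<alpha>. \<forall>q<n \<alpha>. f \<alpha> p q \<in> source_cartan mult one \<Delta>"
    and f_nz: "\<forall>\<alpha><K. \<forall>p<n \<alpha>. \<forall>q<n \<alpha>. f \<alpha> p q \<noteq> 0"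
    and f_mult: "\<forall>\<alpha><K. \<forall>\<beta><K. \<forall>p<n \<alpha>. \<forall>q<n \<alpha>. \<forall>r<n \<beta>. \<forall>s<n \<beta>.
        mult (f \<alpha> p q) (f \<beta> r s) = (if \<alpha> = \<beta> \<and> q = r then f \<alpha> p s else 0)"
    and f_span: "\<forall>x \<in> source_cartan mult one \<Delta>. \<exists>c :: nat \<Rightarrow> nat \<Rightarrow> nat \<Rightarrow> complex.
        x = (\<Sum>\<alpha><K. \<Sum>p<n \<alpha>. \<Sum>q<n \<alpha>. sc (c \<alpha> p q) (f \<alpha> p q))"
begin

definition idx :: "(nat \<times> nat \<times> nat) set" where
  "idx = Sigma {..<K} (\<lambda>\<alpha>. {..<n \<alpha>} \<times> {..<n \<alpha>})"

definition munit :: "nat \<times> nat \<times> nat \<Rightarrow> ('a \<Rightarrow> complex)" where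
  "munit = (\<lambda>(\<alpha>, p, q). f \<alpha> p q)"

definition Smunit :: "nat \<times> nat \<times> nat \<Rightarrow> ('a \<Rightarrow> complex)" where
  "Smunit x = S (munit x)"

definition nz_coord :: "nat \<times> nat \<times> nat \<Rightarrow> 'a" where
  "nz_coord x = (SOME i. munit x i \<noteq> 0)"

text \<open>For \<open>v\<close> in the span of the matrix units, \<open>f\<^sub>\<alpha>\<^sub>p\<^sub>p v f\<^sub>\<alpha>\<^sub>q\<^sub>q\<close> is the
  multiple \<open>c\<^sub>\<alpha>\<^sub>p\<^sub>q f\<^sub>\<alpha>\<^sub>p\<^sub>q\<close>; the coefficient is read off at a coordinate where
  \<open>f\<^sub>\<alpha>\<^sub>p\<^sub>q\<close> does not vanish.\<close>

definition coeff :: "nat \<times> nat \<times> nat \<Rightarrow> ('a \<Rightarrow> complex) \<Rightarrow> complex" where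
  "coeff x v = (case x of (\<alpha>, p, q) \<Rightarrow>
     mult (f \<alpha> p p) (mult v (f \<alpha> q q)) (nz_coord x) / f \<alpha> p q (nz_coord x))"

lemma finite_idx: "finite idx"
  by (simp add: idx_def)

lemma mem_idx [simp]: "(\<alpha>, p, q) \<in> idx \<longleftrightarrow> \<alpha> < K \<and> p < n \<alpha> \<and> q < n \<alpha>"
  by (simp add: idx_def)

lemma munit_apply [simp]: "munit (\<alpha>, p, q) = f \<alpha> p q"
  by (simp add: munit_def)

lemma sum_idx: "(\<Sum>\<alpha><K. \<Sum>p<n \<alpha>. \<Sum>q<n \<alpha>. g (\<alpha>, p, q)) = (\<Sum>x\<in>idx. g x)"
  unfolding idx_def by (simp add: sum.Sigma sum.cartesian_product split_beta)

lemma sum_idx_block: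
  assumes "\<gamma> < K" "a < n \<gamma>"
  shows "(\<Sum>x\<in>idx. if fst x = \<gamma> \<and> snd (snd x) = a then h x else 0) = (\<Sum>r<n \<gamma>. h (\<gamma>, r, a))"
proof -
  have "{x\<in>idx. fst x = \<gamma> \<and> snd (snd x) = a} = (\<lambda>r. (\<gamma>, r, a)) ` {..<n \<gamma>}"
    using assms by (auto simp: idx_def image_iff)
  then show ?thesis
    by (simp add: sum.inter_filter[OF finite_idx, symmetric] sum.reindex inj_on_def)
qed

lemma munit_in_source_cartan: "x \<in> idx \<Longrightarrow> munit x \<in> Ns"
  using f_in by (cases x) auto

lemma munit_nz_coord:
  assumes "x \<in> idx"
  shows "munit x (nz_coord x) \<noteq> 0"
proof -
  have "munit x \<noteq> 0"
    using assms f_nz by (cases x) auto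
  then have "\<exists>i. munit x i \<noteq> 0"
    by (auto simp: fun_eq_iff)
  then show ?thesis
    unfolding nz_coord_def by (rule someI_ex)
qed

lemma lfunctional_coeff: "lfunctional (coeff x)"
  unfolding lfunctional_def coeff_def
  by (simp add: clin_add[OF clin_mult_left] clin_add[OF clin_mult_right] clin_sc[OF clin_mult_left]
      clin_sc[OF clin_mult_right] sc_apply add_divide_distrib split: prod.split)

lemma coeff_munit:
  assumes "x \<in> idx" "y \<in> idx"
  shows "coeff x (munit y) = (if y = x then 1 else 0)"
proof -
  obtain \<alpha> p q \<beta> r s where x: "x = (\<alpha>, p, q)" and y: "y = (\<beta>, r, s)"
    by (cases x, cases y) auto
  have "mult (f \<alpha> p p) (mult (munit y) (f \<alpha> q q)) = (if y = x then f \<alpha> p q else 0)"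
    using assms f_mult by (auto simp: x y mult_zero)
  then show ?thesis
    using munit_nz_coord[OF assms(1)] by (auto simp: coeff_def x)
qed

lemma coeff_one:
  assumes "(\<alpha>, p, q) \<in> idx"
  shows "coeff (\<alpha>, p, q) one = (if p = q then 1 else 0)"
proof -
  have "mult (f \<alpha> p p) (mult one (f \<alpha> q q)) = (if p = q then f \<alpha> p q else 0)"
    using assms f_mult by (simp add: mult_one_left)
  then show ?thesis
    using munit_nz_coord[OF assms] by (cases "p = q") (simp_all add: coeff_def)
qed

lemma coeff_lincomb_munit: "x \<in> idx \<Longrightarrow> coeff x (\<Sum>y\<in>idx. sc (c y) (munit y)) = c x"
  by (simp add: lfunctional_sum[OF lfunctional_coeff] lfunctional_sc[OF lfunctional_coeff]
      coeff_munit finite_idx cong: sum.cong)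

lemma source_cartan_expansion:
  assumes "v \<in> Ns"
  shows "v = (\<Sum>y\<in>idx. sc (coeff y v) (munit y))"
proof -
  obtain c where "v = (\<Sum>\<alpha><K. \<Sum>p<n \<alpha>. \<Sum>q<n \<alpha>. sc (c \<alpha> p q) (f \<alpha> p q))"
    using f_span assms by blast
  then have v: "v = (\<Sum>y\<in>idx. sc (case_prod (\<lambda>\<alpha>. case_prod (c \<alpha>)) y) (munit y))"
    by (simp flip: sum_idx)
  then show ?thesis
    by (subst (2) v) (simp add: coeff_lincomb_munit cong: sum.cong)
qed

lemma Smunit_mult:
  assumes "(\<alpha>, p, q) \<in> idx" "(\<beta>, r, s) \<in> idx"
  shows "mult (Smunit (\<alpha>, p, q)) (Smunit (\<beta>, r, s)) = (if \<beta> = \<alpha> \<and> s = p then Smunit (\<alpha>, r, q) else 0)"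
  using assms f_mult by (simp add: Smunit_def S_mult[symmetric] clin_zero[OF clin_S])

lemma sum_Smunit_mult:
  assumes x: "(\<gamma>, a, b) \<in> idx" and \<phi>: "lfunctional \<phi>"
  shows "(\<Sum>y\<in>idx. c y * \<phi> (mult (Smunit (\<gamma>, a, b)) (Smunit y)))
    = (\<Sum>r<n \<gamma>. c (\<gamma>, r, a) * \<phi> (Smunit (\<gamma>, r, b)))"
proof -
  have "c y * \<phi> (mult (Smunit (\<gamma>, a, b)) (Smunit y))
      = (if fst y = \<gamma> \<and> snd (snd y) = a then c y * \<phi> (Smunit (\<gamma>, fst (snd y), b)) else 0)"
    if "y \<in> idx" for y
    using that Smunit_mult[OF x, of "fst y" "fst (snd y)" "snd (snd y)"]
    by (auto simp: lfunctional_zero[OF \<phi>])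
  then show ?thesis
    using x by (simp add: sum_idx_block cong: sum.cong)
qed

definition e_coeff :: "nat \<times> nat \<times> nat \<Rightarrow> nat \<times> nat \<times> nat \<Rightarrow> complex" where
  "e_coeff x y = (\<Sum>i\<in>UNIV. coeff x (bv i) * coeff y (S (row e i)))"

lemma row_e_expansion: "row e i = (\<Sum>y\<in>idx. sc (coeff y (S (row e i))) (Smunit y))"
proof -
  have "S (row e i) = (\<Sum>y\<in>idx. sc (coeff y (S (row e i))) (munit y))"
    by (rule source_cartan_expansion[OF S_target_cartan[OF row_e_in_target_cartan]])
  then have "S (S (row e i)) = S (\<Sum>y\<in>idx. sc (coeff y (S (row e i))) (munit y))"
    by simp
  then show ?thesis
    by (simp add: S_S clin_sum[OF clin_S] clin_sc[OF clin_S] Smunit_def)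
qed

lemma lslice_coeff_e: "lslice (coeff x) e = (\<Sum>y\<in>idx. sc (e_coeff x y) (Smunit y))"
proof -
  have "lslice (coeff x) e = (\<Sum>i\<in>UNIV. \<Sum>y\<in>idx. sc (coeff x (bv i) * coeff y (S (row e i))) (Smunit y))"
    by (subst lslice_row_sum, subst row_e_expansion) (simp add: sc_sum_right sc_sc)
  then show ?thesis
    by (subst (asm) sum.swap) (simp add: e_coeff_def sc_sum_left)
qed

lemma e_expansion: "e = (\<Sum>x\<in>idx. \<Sum>y\<in>idx. sc (e_coeff x y) (tens (munit x) (Smunit y)))"
proof -
  have "e = (\<Sum>x\<in>idx. tens (munit x) (lslice (coeff x) e))"
    by (rule tensor_expansion_left[OF lfunctional_coeff
          source_cartan_expansion[OF col_e_in_source_cartan]])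
  then show ?thesis
    by (simp add: lslice_coeff_e clin_sum[OF clin_tens_right] clin_sc[OF clin_tens_right])
qed

lemma one_expansion: "one = (\<Sum>x\<in>idx. \<Sum>y\<in>idx. sc (e_coeff x y) (mult (Smunit x) (Smunit y)))"
proof -
  have "one = tmu mult (tmap S id e)"
    using eps_s_one by (simp add: eps_s_def)
  also have "\<dots> = (\<Sum>x\<in>idx. \<Sum>y\<in>idx. sc (e_coeff x y) (tmu mult (tmap S id (tens (munit x) (Smunit y)))))"
    by (subst e_expansion) (rule clin_double_sum[OF clin_comp[OF clin_tmu clin_tmap]])
  finally show ?thesis
    by (simp add: tmap_tens[OF clin_S clin_id(2)] tmu_tens[OF cbilinear_mult] Smunit_def)
qed

lemma e_coeff_trace:
  assumes w: "(\<gamma>, u, v) \<in> idx"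
  shows "(\<Sum>p<n \<gamma>. e_coeff (\<gamma>, p, v) (\<gamma>, u, p)) = (if u = v then 1 else 0)"
proof -
  define \<psi> where "\<psi> z = coeff (\<gamma>, u, v) (S z)" for z
  have \<psi>: "lfunctional \<psi>"
    using lfunctional_coeff by (simp add: \<psi>_def lfunctional_def clin_add[OF clin_S] clin_sc[OF clin_S])
  have \<psi>_Smunit: "\<psi> (Smunit z) = (if z = (\<gamma>, u, v) then 1 else 0)" if "z \<in> idx" for z
    using coeff_munit[OF w that] by (simp add: \<psi>_def Smunit_def S_S)
  have inner: "(\<Sum>y\<in>idx. e_coeff x y * \<psi> (mult (Smunit x) (Smunit y)))
      = (if fst x = \<gamma> \<and> snd (snd x) = v then e_coeff x (\<gamma>, u, fst (snd x)) else 0)"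
    if x: "x \<in> idx" for x
  proof -
    obtain \<beta> a b where x_eq: "x = (\<beta>, a, b)"
      by (cases x) auto
    have "(\<Sum>r<n \<beta>. e_coeff x (\<beta>, r, a) * \<psi> (Smunit (\<beta>, r, b)))
        = (\<Sum>r<n \<beta>. if r = u \<and> \<beta> = \<gamma> \<and> b = v then e_coeff x (\<gamma>, u, a) else 0)"
      using x by (intro sum.cong) (auto simp: x_eq \<psi>_Smunit)
    then show ?thesis
      using x w sum_Smunit_mult[of \<beta> a b \<psi> "e_coeff x"] \<psi> by (auto simp: x_eq)
  qed
  have "(if u = v then 1 else 0) = \<psi> one"
    using coeff_one[OF w] by (simp add: \<psi>_def S_one)
  also have "\<dots> = (\<Sum>x\<in>idx. \<Sum>y\<in>idx. e_coeff x y * \<psi> (mult (Smunit x) (Smunit y)))"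
    by (subst one_expansion) (simp add: lfunctional_sum[OF \<psi>] lfunctional_sc[OF \<psi>])
  also have "\<dots> = (\<Sum>p<n \<gamma>. e_coeff (\<gamma>, p, v) (\<gamma>, u, p))"
    using w by (simp add: inner sum_idx_block cong: sum.cong)
  finally show ?thesis ..
qed

lemma eps_s_S_source_cartan:
  assumes x: "x \<in> Ns"
  shows "eps_s (S x) = x"
proof -
  let ?L = "\<lambda>z. tmu mult (tmap S id (tmult mult (tens (S x) one) z))"
  have L: "clin ?L"
    by (rule clin_comp[OF clin_tmu clin_comp[OF clin_tmap clin_tmult_right]])
  have L_term: "?L (tens (munit a) (Smunit b)) = mult (mult (Smunit a) (Smunit b)) x"
    if "b \<in> idx" for a b
  proof -
    have "mult x (Smunit b) = mult (Smunit b) x"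
      unfolding Smunit_def
      by (rule source_cartan_commute[OF x Delta_S_source_cartan[OF munit_in_source_cartan[OF that]]])
    then show ?thesis
      by (simp add: tmult_tens[OF cbilinear_mult] mult_one_left tmap_tens[OF clin_S clin_id(2)]
          tmu_tens[OF cbilinear_mult] S_mult S_S Smunit_def mult_assoc)
  qed
  have "eps_s (S x) = ?L e"
    by (simp add: eps_s_def Delta_S_source_cartan[OF x])
  also have "\<dots> = (\<Sum>a\<in>idx. \<Sum>b\<in>idx. sc (e_coeff a b) (mult (mult (Smunit a) (Smunit b)) x))"
    by (subst e_expansion) (simp add: clin_double_sum[OF L] L_term cong: sum.cong)
  also have "\<dots> = mult one x"
    by (subst (2) one_expansion) (rule clin_double_sum[OF clin_mult_left, symmetric])
  finally show ?thesis
    by (simp add: mult_one_left)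
qed

lemma e_coeff_eps:
  assumes w: "(\<gamma>, u, v) \<in> idx" and x: "x \<in> idx"
  shows "(\<Sum>r<n \<gamma>. e_coeff x (\<gamma>, r, u) * \<epsilon> (Smunit (\<gamma>, r, v))) = (if x = (\<gamma>, u, v) then 1 else 0)"
proof -
  let ?w = "(\<gamma>, u, v)"
  have L: "clin (\<lambda>z. rslice \<epsilon> (tmult mult (tens one (Smunit ?w)) z))"
    by (rule clin_comp[OF clin_rslice clin_tmult_right])
  have "munit ?w = rslice \<epsilon> (tmult mult (tens one (Smunit ?w)) e)"
    using eps_s_S_source_cartan[OF munit_in_source_cartan[OF w]] by (simp add: eps_s_eq_rslice Smunit_def)
  also have "\<dots> = (\<Sum>y\<in>idx. sc (\<Sum>z\<in>idx. e_coeff y z * \<epsilon> (mult (Smunit ?w) (Smunit z))) (munit y))"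
    by (subst e_expansion)
       (simp add: clin_double_sum[OF L] tmult_tens[OF cbilinear_mult] mult_one_left
        rslice_tens[OF lfunctional_eps] sc_sc sc_sum_left)
  finally have "coeff x (munit ?w) = (\<Sum>z\<in>idx. e_coeff x z * \<epsilon> (mult (Smunit ?w) (Smunit z)))"
    by (simp add: coeff_lincomb_munit[OF x])
  then show ?thesis
    unfolding coeff_munit[OF x w] sum_Smunit_mult[OF w lfunctional_eps] by auto
qed

lemma eps_Smunit:
  assumes "(\<gamma>, q, v) \<in> idx"
  shows "\<epsilon> (Smunit (\<gamma>, q, v)) = of_nat (n \<gamma>) * (if q = v then 1 else 0)"
proof -
  have "of_nat (n \<gamma>) * (if q = v then 1 else 0)
      = (\<Sum>a<n \<gamma>. \<Sum>r<n \<gamma>. e_coeff (\<gamma>, a, q) (\<gamma>, r, a) * \<epsilon> (Smunit (\<gamma>, r, v)))"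
    using assms by (simp add: e_coeff_eps)
  also have "\<dots> = (\<Sum>r<n \<gamma>. (\<Sum>a<n \<gamma>. e_coeff (\<gamma>, a, q) (\<gamma>, r, a)) * \<epsilon> (Smunit (\<gamma>, r, v)))"
    by (subst sum.swap) (simp add: sum_distrib_right)
  also have "\<dots> = \<epsilon> (Smunit (\<gamma>, q, v))"
    using assms by (simp add: e_coeff_trace)
  finally show ?thesis ..
qed

lemma e_coeff_eq:
  assumes x: "x \<in> idx" and y: "(\<gamma>, v, u) \<in> idx"
  shows "e_coeff x (\<gamma>, v, u) = (if x = (\<gamma>, u, v) then 1 / of_nat (n \<gamma>) else 0)"
proof -
  have "(\<Sum>r<n \<gamma>. e_coeff x (\<gamma>, r, u) * \<epsilon> (Smunit (\<gamma>, r, v)))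
      = (\<Sum>r<n \<gamma>. if r = v then e_coeff x (\<gamma>, v, u) * of_nat (n \<gamma>) else 0)"
    using y by (intro sum.cong) (simp_all add: eps_Smunit)
  then have "e_coeff x (\<gamma>, v, u) * of_nat (n \<gamma>) = (if x = (\<gamma>, u, v) then 1 else 0)"
    using e_coeff_eps[of \<gamma> u v x] x y by simp
  moreover have "n \<gamma> > 0"
    using y by simp
  ultimately show ?thesis
    by (auto simp: field_simps)
qed

lemma e_eq_matrix_units_sum:
  "e = (\<Sum>\<alpha><K. sc (1 / of_nat (n \<alpha>)) (\<Sum>p<n \<alpha>. \<Sum>q<n \<alpha>. tens (f \<alpha> p q) (S (f \<alpha> q p))))"
proof -
  define swap_pq :: "nat \<times> nat \<times> nat \<Rightarrow> nat \<times> nat \<times> nat"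
    where "swap_pq = (\<lambda>(\<alpha>, p, q). (\<alpha>, q, p))"
  have "sc (e_coeff x y) (tens (munit x) (Smunit y))
      = (if y = swap_pq x then sc (1 / of_nat (n (fst x))) (tens (munit x) (Smunit y)) else 0)"
    if "x \<in> idx" "y \<in> idx" for x y
    using that e_coeff_eq[OF that(1), of "fst y" "fst (snd y)" "snd (snd y)"]
    by (cases x, cases y) (auto simp: swap_pq_def)
  then have "e = (\<Sum>x\<in>idx. sc (1 / of_nat (n (fst x))) (tens (munit x) (Smunit (swap_pq x))))"
    by (subst e_expansion) (auto simp: finite_idx swap_pq_def intro!: sum.cong)
  then show ?thesis
    by (simp add: sum_idx[symmetric] swap_pq_def Smunit_def sc_sum_right)
qed

end

theorem proposition2p1p11:
  fixes mult :: "('i::finite \<Rightarrow> complex) \<Rightarrow> ('i \<Rightarrow> complex) \<Rightarrow> ('i \<Rightarrow> complex)"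
    and star :: "('i \<Rightarrow> complex) \<Rightarrow> ('i \<Rightarrow> complex)"
    and one :: "'i \<Rightarrow> complex"
    and \<Delta> :: "('i \<Rightarrow> complex) \<Rightarrow> ('i \<times> 'i \<Rightarrow> complex)"
    and S :: "('i \<Rightarrow> complex) \<Rightarrow> ('i \<Rightarrow> complex)"
    and \<epsilon> :: "('i \<Rightarrow> complex) \<Rightarrow> complex"
    and K :: nat and n :: "nat \<Rightarrow> nat"
    and f :: "nat \<Rightarrow> nat \<Rightarrow> nat \<Rightarrow> ('i \<Rightarrow> complex)"
  assumes wka: "weak_kac_algebra mult star one \<Delta> S \<epsilon>"
    and npos: "\<forall>\<alpha><K. 0 < n \<alpha>"
    and f_in: "\<forall>\<alpha><K. \<forall>p<n \<alpha>. \<forall>q<n \<alpha>. f \<alpha> p q \<in> source_cartan mult one \<Delta>"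
    and f_nz: "\<forall>\<alpha><K. \<forall>p<n \<alpha>. \<forall>q<n \<alpha>. f \<alpha> p q \<noteq> 0"
    and f_mult: "\<forall>\<alpha><K. \<forall>\<beta><K. \<forall>p<n \<alpha>. \<forall>q<n \<alpha>. \<forall>r<n \<beta>. \<forall>s<n \<beta>.
        mult (f \<alpha> p q) (f \<beta> r s) = (if \<alpha> = \<beta> \<and> q = r then f \<alpha> p s else 0)"
    and f_star: "\<forall>\<alpha><K. \<forall>p<n \<alpha>. \<forall>q<n \<alpha>. star (f \<alpha> p q) = f \<alpha> q p"
    and f_sum: "(\<Sum>\<alpha><K. \<Sum>p<n \<alpha>. f \<alpha> p p) = one"
    and f_span: "\<forall>x \<in> source_cartan mult one \<Delta>. \<exists>c :: nat \<Rightarrow> nat \<Rightarrow> nat \<Rightarrow> complex.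
        x = (\<Sum>\<alpha><K. \<Sum>p<n \<alpha>. \<Sum>q<n \<alpha>. sc (c \<alpha> p q) (f \<alpha> p q))"
  shows "\<Delta> one = (\<Sum>\<alpha><K. sc (1 / of_nat (n \<alpha>))
            (\<Sum>p<n \<alpha>. \<Sum>q<n \<alpha>. tens (f \<alpha> p q) (S (f \<alpha> q p))))"
proof -
  interpret weak_kac_matrix_units mult star one \<Delta> S \<epsilon> K n f
    by (rule weak_kac_matrix_units.intro[OF weak_kac.intro[OF wka]
          weak_kac_matrix_units_axioms.intro[OF f_in f_nz f_mult f_span]])
  show ?thesis
    by (rule e_eq_matrix_units_sum)
qed

end
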